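(* Define $C(2)=1$ and $C(N)=\frac N2\left(2C(N-1)+1\right)$ for $N\ge 3$. Let $N\ge 3$ and let $\Sigma=(\sigma_1,\dots,\sigma_n)$ be a symbolic collision sequence on the vertex set $\{1,\dots,N\}$ which is $C(N)$-rich. Then there exist a label $k\in\{1,\dots,N\}$ and two indices $1\le p<q\le n$ such that: (i) $k\in\sigma_p\cap\sigma_q$; (ii) $k\notin\bigcup_{j=p+1}^{q-1}\sigma_j$; (iii) if $\sigma_p=\sigma_q$, then there exists $j$ with $p<j<q$ and $\sigma_p\cap\sigma_j\neq\emptyset$; (iv) the sequence $\Sigma'$ obtained from $\Sigma$ by deleting all $\sigma_j$ containing $k$ is $\left(2C(N-1)+1\right)$-rich on the vertex set $\{1,\dots,N\}\setminus\{k\}$.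
   Context: A symbolic collision sequence on a finite vertex set $V$ is a finite sequence $\Sigma=(\sigma_1,\dots,\sigma_n)$ of unordered pairs $\sigma_j=\{a,b\}$ of distinct elements of $V$ (listed in time order). For a positive number $C$, $\Sigma$ is called $C$-rich on $V$ if there are at least $C$ pairwise disjoint blocks of consecutive indices $[a_1,b_1],[a_2,b_2],\dots$ with $b_1<a_2$, $b_2<a_3$, etc., such that for each block the graph with vertex set $V$ and edge set $\{\sigma_j: a_i\le j\le b_i\}$ is connected. *)

theory Defs
  imports Main Complex_Main
begin

text \<open>A symbolic collision sequence on V: a list of unordered pairs of distinct
elements of V (list position j-1 holds sigma_j, indices are 1-based in the statement).\<close>
definition collision_seq :: "'a set \<Rightarrow> 'a set list \<Rightarrow> bool" where
  "collision_seq V \<Sigma> \<longleftrightarrow> (\<forall>\<sigma>\<in>set \<Sigma>. \<exists>a b. \<sigma> = {a, b} \<and> a \<noteq> b \<and> a \<in> V \<and> b \<in> V)"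

definition graph_connected :: "'a set \<Rightarrow> 'a set set \<Rightarrow> bool" where
  "graph_connected V E \<longleftrightarrow>
     (\<forall>u\<in>V. \<forall>v\<in>V. (u, v) \<in> {(x, y). x \<in> V \<and> y \<in> V \<and> {x, y} \<in> E}\<^sup>*)"

definition rich :: "real \<Rightarrow> 'a set \<Rightarrow> 'a set list \<Rightarrow> bool" where
  "rich C V \<Sigma> \<longleftrightarrow>
     (\<exists>(m::nat) (a::nat \<Rightarrow> nat) (b::nat \<Rightarrow> nat).
        real m \<ge> C \<and>
        (\<forall>i<m. 1 \<le> a i \<and> a i \<le> b i \<and> b i \<le> length \<Sigma> \<and>
               graph_connected V {\<Sigma> ! (j - 1) | j. a i \<le> j \<and> j \<le> b i}) \<and>
        (\<forall>i. Suc i < m \<longrightarrow> b i < a (Suc i)))"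

fun Cconst :: "nat \<Rightarrow> real" where
  "Cconst n = (if n \<le> 2 then 1 else real n / 2 * (2 * Cconst (n - 1) + 1))"

end

theory Submission imports Defs begin

text \<open>Every block of a witness of richness is a connected graph on \<open>N \<ge> 3\<close> vertices, so it has
at least two non-cut vertices, for instance a vertex farthest (in hop distance) from any given one.
Counting incidences over the at least \<open>C(N)\<close> blocks yields a label \<open>k\<close> that is a non-cut vertex
of at least \<open>2 C(N) / N = 2 C(N-1) + 1\<close> blocks, and these blocks, with the collisions of \<open>k\<close>
removed, witness (iv).
For (i)--(iii), pick collisions of \<open>k\<close> in the first and in the third block. If no two consecutive
collisions of \<open>k\<close> satisfied (iii), then all collisions of \<open>k\<close> in between would be one and the same
pair \<open>e\<close>, and every collision in between meeting \<open>e\<close> would be \<open>e\<close> itself. Then \<open>e\<close> would be a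
connected component of the graph of the second block, which is connected on at least three vertices.\<close>

declare Cconst.simps[simp del]

lemma Cconst_rec: "3 \<le> n \<Longrightarrow> Cconst n = real n / 2 * (2 * Cconst (n - 1) + 1)"
  by (subst Cconst.simps) simp

lemma Cconst_ge_1: "1 \<le> Cconst n"
proof (induction n rule: less_induct)
  case (less n)
  show ?case
  proof (cases "n \<le> 2")
    case True
    then show ?thesis by (subst Cconst.simps) simp
  next
    case False
    have "1 * 1 \<le> real n / 2 * (2 * Cconst (n - 1) + 1)"
      using False less.IH[of "n - 1"] by (intro mult_mono) auto
    then show ?thesis using False by (simp add: Cconst_rec)
  qed
qed

lemma Cconst_ge_3: "3 \<le> n \<Longrightarrow> 3 \<le> Cconst n"
  using mult_mono[of "3 / 2" "real n / 2" 2 "2 * Cconst (n - 1) + 1"] Cconst_ge_1[of "n - 1"]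
  by (simp add: Cconst_rec)

lemma exists_other_if_card_ge_2:
  assumes "finite V" "2 \<le> card V"
  shows "\<exists>x\<in>V. x \<noteq> u"
proof (rule ccontr)
  assume "\<not> ?thesis"
  then have "V \<subseteq> {u}" by auto
  then show False using card_mono[of "{u}" V] assms(2) by simp
qed

subsection \<open>Connected graphs and non-cut vertices\<close>

definition edge_rel :: "'a set \<Rightarrow> 'a set set \<Rightarrow> ('a \<times> 'a) set" where
  "edge_rel V E = {(x, y). x \<in> V \<and> y \<in> V \<and> {x, y} \<in> E}"

lemma graph_connected_iff_edge_rel:
  "graph_connected V E \<longleftrightarrow> (\<forall>u\<in>V. \<forall>v\<in>V. (u, v) \<in> (edge_rel V E)\<^sup>*)"
  by (simp add: graph_connected_def edge_rel_def)

lemma sym_edge_rel: "sym (edge_rel V E)"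
  by (auto simp: sym_def edge_rel_def insert_commute)

lemma graph_connectedI_reach:
  assumes "u \<in> V" and reach: "\<And>x. x \<in> V \<Longrightarrow> (x, u) \<in> (edge_rel V E)\<^sup>*"
  shows "graph_connected V E"
proof -
  have "(u, y) \<in> (edge_rel V E)\<^sup>*" if "y \<in> V" for y
    using symD[OF sym_rtrancl[OF sym_edge_rel] reach[OF that]] .
  then show ?thesis
    using reach by (auto simp: graph_connected_iff_edge_rel intro: rtrancl_trans)
qed

lemma graph_connected_has_edge:
  assumes "graph_connected V E" "x \<in> V" "y \<in> V" "y \<noteq> x"
  shows "\<exists>e\<in>E. x \<in> e"
proof -
  have "(x, y) \<in> (edge_rel V E)\<^sup>*"
    using assms(1-3) by (simp add: graph_connected_iff_edge_rel)
  then show ?thesis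
    by (rule converse_rtranclE) (use assms(4) in \<open>auto simp: edge_rel_def\<close>)
qed

lemma graph_connected_edges_nonempty:
  assumes "graph_connected V E" "finite V" "2 \<le> card V"
  shows "E \<noteq> {}"
proof -
  obtain x where "x \<in> V"
    using assms(3) by fastforce
  moreover obtain y where "y \<in> V" "y \<noteq> x"
    using exists_other_if_card_ge_2[OF assms(2,3)] by blast
  ultimately show ?thesis
    using graph_connected_has_edge[OF assms(1)] by blast
qed

definition hop_dist :: "('a \<times> 'a) set \<Rightarrow> 'a \<Rightarrow> 'a \<Rightarrow> nat" where
  "hop_dist R x u = (LEAST n. (x, u) \<in> R ^^ n)"

lemma relpow_hop_dist: "(x, u) \<in> R\<^sup>* \<Longrightarrow> (x, u) \<in> R ^^ hop_dist R x u"
  unfolding hop_dist_def by (rule LeastI_ex) (simp add: rtrancl_power)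

lemma hop_dist_le: "(x, u) \<in> R ^^ n \<Longrightarrow> hop_dist R x u \<le> n"
  unfolding hop_dist_def by (rule Least_le)

lemma hop_dist_eq_0_iff:
  assumes "(x, u) \<in> R\<^sup>*"
  shows "hop_dist R x u = 0 \<longleftrightarrow> x = u"
proof
  show "hop_dist R x u = 0 \<Longrightarrow> x = u"
    using relpow_hop_dist[OF assms] by simp
  show "x = u \<Longrightarrow> hop_dist R x u = 0"
    using hop_dist_le[of x x 0 R] by simp
qed

text \<open>Along a shortest path to \<open>u\<close> the hop distance strictly decreases, so a shortest path from
\<open>x\<close> avoids every other vertex at least as far from \<open>u\<close> as \<open>x\<close>.\<close>

lemma rtrancl_avoiding_farther:
  assumes "(x, u) \<in> R\<^sup>*" "x \<noteq> v" "hop_dist R x u \<le> hop_dist R v u"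
  shows "(x, u) \<in> (R \<inter> (- {v}) \<times> (- {v}))\<^sup>*"
  using assms
proof (induction "hop_dist R x u" arbitrary: x rule: less_induct)
  case less
  show ?case
  proof (cases "hop_dist R x u")
    case 0
    then show ?thesis using hop_dist_eq_0_iff[OF less.prems(1)] by simp
  next
    case (Suc n)
    then have "(x, u) \<in> R ^^ Suc n"
      using relpow_hop_dist[OF less.prems(1)] by simp
    then obtain y where xy: "(x, y) \<in> R" and yu: "(y, u) \<in> R ^^ n"
      by (rule relpow_Suc_E2)
    have closer: "hop_dist R y u < hop_dist R x u"
      using hop_dist_le[OF yu] Suc by simp
    then have "y \<noteq> v" using less.prems(3) by auto
    have "(x, y) \<in> R \<inter> (- {v}) \<times> (- {v})"
      using xy \<open>y \<noteq> v\<close> less.prems(2) by simp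
    moreover have "(y, u) \<in> (R \<inter> (- {v}) \<times> (- {v}))\<^sup>*"
      using less.hyps[OF closer] closer less.prems(3) \<open>y \<noteq> v\<close> relpow_imp_rtrancl[OF yu]
      by simp
    ultimately show ?thesis by (rule converse_rtrancl_into_rtrancl)
  qed
qed

definition noncut_vertices :: "'a set \<Rightarrow> 'a set set \<Rightarrow> 'a set" where
  "noncut_vertices V E = {v \<in> V. graph_connected (V - {v}) {e \<in> E. v \<notin> e}}"

lemma exists_noncut_vertex_other:
  assumes "finite V" "graph_connected V E" "u \<in> V" "x \<in> V" "x \<noteq> u"
  shows "\<exists>v\<in>noncut_vertices V E. v \<noteq> u"
proof -
  let ?R = "edge_rel V E"
  have reach: "(y, u) \<in> ?R\<^sup>*" if "y \<in> V" for y
    using assms(2,3) that by (simp add: graph_connected_iff_edge_rel)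
  define d where "d y = hop_dist ?R y u" for y
  have "Max (d ` V) \<in> d ` V"
    using assms(1,3) by (intro Max_in) auto
  then obtain v where v: "v \<in> V" "d v = Max (d ` V)" by auto
  have farthest: "d y \<le> d v" if "y \<in> V" for y
    using v(2) assms(1) that by simp
  have "d x \<noteq> 0"
    using hop_dist_eq_0_iff[OF reach[OF assms(4)]] assms(5) by (simp add: d_def)
  moreover have "d u = 0"
    using hop_dist_eq_0_iff[OF reach[OF assms(3)]] by (simp add: d_def)
  ultimately have "v \<noteq> u"
    using farthest[OF assms(4)] by auto
  have avoid: "?R \<inter> (- {v}) \<times> (- {v}) \<subseteq> edge_rel (V - {v}) {e \<in> E. v \<notin> e}"
    by (auto simp: edge_rel_def)
  have "(y, u) \<in> (edge_rel (V - {v}) {e \<in> E. v \<notin> e})\<^sup>*" if "y \<in> V - {v}" for y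
  proof -
    have "(y, u) \<in> (?R \<inter> (- {v}) \<times> (- {v}))\<^sup>*"
      using that farthest[of y] by (intro rtrancl_avoiding_farther[OF reach]) (auto simp: d_def)
    then show ?thesis using rtrancl_mono[OF avoid] by blast
  qed
  then have "graph_connected (V - {v}) {e \<in> E. v \<notin> e}"
    using \<open>v \<noteq> u\<close> assms(3) by (intro graph_connectedI_reach[of u]) auto
  then show ?thesis using v(1) \<open>v \<noteq> u\<close> by (auto simp: noncut_vertices_def)
qed

lemma two_le_card_noncut_vertices:
  assumes "finite V" "2 \<le> card V" "graph_connected V E"
  shows "2 \<le> card (noncut_vertices V E)"
proof -
  have other: "\<exists>x\<in>V. x \<noteq> u" for u
    using exists_other_if_card_ge_2[OF assms(1,2)] .
  have sub: "noncut_vertices V E \<subseteq> V" by (auto simp: noncut_vertices_def)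
  obtain u x where "u \<in> V" "x \<in> V" "x \<noteq> u" using other by blast
  then obtain v where v: "v \<in> noncut_vertices V E"
    using exists_noncut_vertex_other[OF assms(1,3)] by blast
  then have "v \<in> V" using sub by blast
  then obtain y where "y \<in> V" "y \<noteq> v" using other by blast
  then obtain w where w: "w \<in> noncut_vertices V E" "w \<noteq> v"
    using exists_noncut_vertex_other[OF assms(1,3) \<open>v \<in> V\<close>] by blast
  have "card {v, w} \<le> card (noncut_vertices V E)"
    using v w sub assms(1) by (intro card_mono) (auto intro: finite_subset)
  then show ?thesis using w(2) by simp
qed

subsection \<open>Blocks of a sequence and their filtering\<close>

abbreviation segment :: "'a list \<Rightarrow> nat \<Rightarrow> nat \<Rightarrow> 'a set" where
  "segment xs a b \<equiv> {xs ! (j - 1) | j. a \<le> j \<and> j \<le> b}"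

lemma segment_eq_set_drop_take:
  assumes "1 \<le> a" "b \<le> length xs"
  shows "segment xs a b = set (drop (a - 1) (take b xs))"
proof (intro equalityI subsetI)
  fix e assume "e \<in> segment xs a b"
  then obtain j where j: "a \<le> j" "j \<le> b" "e = xs ! (j - 1)" by blast
  then have "e = drop (a - 1) (take b xs) ! (j - a)" "j - a < length (drop (a - 1) (take b xs))"
    using assms by (auto simp: nth_take)
  then show "e \<in> set (drop (a - 1) (take b xs))" by simp
next
  fix e assume "e \<in> set (drop (a - 1) (take b xs))"
  then obtain i where "i < length (drop (a - 1) (take b xs))" "e = drop (a - 1) (take b xs) ! i"
    by (auto simp: in_set_conv_nth)
  then have "a \<le> a + i" "a + i \<le> b" "e = xs ! (a + i - 1)"
    using assms by (auto simp: nth_take)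
  then show "e \<in> segment xs a b" by blast
qed

text \<open>Position in \<open>filter P xs\<close> of the last entry kept among the first \<open>n\<close> entries of \<open>xs\<close>.\<close>

definition filter_index :: "('a \<Rightarrow> bool) \<Rightarrow> 'a list \<Rightarrow> nat \<Rightarrow> nat" where
  "filter_index P xs n = length (filter P (take n xs))"

lemma filter_index_mono:
  assumes "n \<le> n'"
  shows "filter_index P xs n \<le> filter_index P xs n'"
proof -
  have "take n' xs = take n xs @ drop n (take n' xs)"
    using assms by (metis append_take_drop_id min.absorb1 take_take)
  then show ?thesis
    unfolding filter_index_def by (metis filter_append length_append le_add1)
qed

lemma filter_index_le_length: "filter_index P xs n \<le> length (filter P xs)"
  unfolding filter_index_def by (metis append_take_drop_id filter_append le_add1 length_append)

lemma take_filter_index: "take (filter_index P xs n) (filter P xs) = filter P (take n xs)"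
  unfolding filter_index_def by (metis append_eq_conv_conj append_take_drop_id filter_append)

lemma segment_filter:
  assumes "1 \<le> a" "a \<le> b" "b \<le> length xs"
  shows "segment (filter P xs) (Suc (filter_index P xs (a - 1))) (filter_index P xs b)
         = {e \<in> segment xs a b. P e}"
proof -
  have "take b xs = take (a - 1) xs @ drop (a - 1) (take b xs)"
    using assms by (metis append_take_drop_id diff_le_self min.absorb1 order_trans take_take)
  then have split:
    "filter P (take b xs) = filter P (take (a - 1) xs) @ filter P (drop (a - 1) (take b xs))"
    by (metis filter_append)
  have "segment (filter P xs) (Suc (filter_index P xs (a - 1))) (filter_index P xs b)
        = set (drop (filter_index P xs (a - 1)) (filter P (take b xs)))"
    by (subst segment_eq_set_drop_take) (simp_all add: filter_index_le_length take_filter_index)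
  also have "\<dots> = set (filter P (drop (a - 1) (take b xs)))"
    by (simp add: split filter_index_def)
  also have "\<dots> = {e \<in> segment xs a b. P e}"
    using segment_eq_set_drop_take[OF assms(1,3)] by auto
  finally show ?thesis .
qed

definition block_family :: "'a list \<Rightarrow> nat \<Rightarrow> (nat \<Rightarrow> nat) \<Rightarrow> (nat \<Rightarrow> nat) \<Rightarrow> bool" where
  "block_family xs m a b \<longleftrightarrow>
     (\<forall>i<m. 1 \<le> a i \<and> a i \<le> b i \<and> b i \<le> length xs) \<and> (\<forall>i. Suc i < m \<longrightarrow> b i < a (Suc i))"

lemma rich_iff_block_family:
  "rich C V xs \<longleftrightarrow>
     (\<exists>m a b. C \<le> real m \<and> block_family xs m a b \<and>
        (\<forall>i<m. graph_connected V (segment xs (a i) (b i))))"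
  unfolding rich_def block_family_def by blast

lemma rich_mono: "rich C V xs \<Longrightarrow> C' \<le> C \<Longrightarrow> rich C' V xs"
  unfolding rich_def by (blast intro: order_trans)

lemma block_family_less:
  assumes "block_family xs m a b" "i < i'" "i' < m"
  shows "b i < a i'"
  using assms(2,3)
proof (induction i')
  case 0
  then show ?case by simp
next
  case (Suc i')
  have step: "b i' < a (Suc i')"
    using assms(1) Suc.prems(2) by (simp add: block_family_def)
  show ?case
  proof (cases "i = i'")
    case True
    then show ?thesis using step by simp
  next
    case False
    then have "b i < a i'" using Suc by simp
    moreover have "a i' \<le> b i'"
      using assms(1) Suc.prems(2) by (simp add: block_family_def)
    ultimately show ?thesis using step by simp
  qed
qed

lemma block_family_reindex:
  assumes "block_family xs m a b" "sorted_wrt (<) L" "set L \<subseteq> {..<m}"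
  shows "block_family xs (length L) (\<lambda>t. a (L ! t)) (\<lambda>t. b (L ! t))"
  unfolding block_family_def
proof (intro conjI allI impI)
  fix t assume "t < length L"
  then have "L ! t < m" using assms(3) nth_mem by blast
  then show "1 \<le> a (L ! t)" "a (L ! t) \<le> b (L ! t)" "b (L ! t) \<le> length xs"
    using assms(1) by (auto simp: block_family_def)
next
  fix t assume "Suc t < length L"
  then have "L ! t < L ! Suc t" "L ! Suc t < m"
    using assms(2,3) nth_mem by (auto simp: sorted_wrt_nth_less)
  then show "b (L ! t) < a (L ! Suc t)" by (rule block_family_less[OF assms(1)])
qed

lemma block_family_filter:
  assumes fam: "block_family xs m a b"
    and kept: "\<And>i. i < m \<Longrightarrow> \<exists>e\<in>segment xs (a i) (b i). P e"
  shows "block_family (filter P xs) m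
           (\<lambda>i. Suc (filter_index P xs (a i - 1))) (\<lambda>i. filter_index P xs (b i))"
  unfolding block_family_def
proof (intro conjI allI impI)
  fix i assume "i < m"
  then have "segment (filter P xs) (Suc (filter_index P xs (a i - 1))) (filter_index P xs (b i)) \<noteq> {}"
    using fam kept[of i] segment_filter[of "a i" "b i" xs P] by (auto simp: block_family_def)
  then show "1 \<le> Suc (filter_index P xs (a i - 1))"
    and "Suc (filter_index P xs (a i - 1)) \<le> filter_index P xs (b i)"
    by auto
  show "filter_index P xs (b i) \<le> length (filter P xs)" by (rule filter_index_le_length)
next
  fix i assume "Suc i < m"
  then have "b i < a (Suc i)" using fam by (simp add: block_family_def)
  then have "b i \<le> a (Suc i) - 1" by simp
  then show "filter_index P xs (b i) < Suc (filter_index P xs (a (Suc i) - 1))"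
    by (simp add: filter_index_mono le_imp_less_Suc)
qed

lemma rich_filter_subfamily:
  assumes fam: "block_family xs m a b" and S: "S \<subseteq> {..<m}" "C \<le> real (card S)"
    and con: "\<And>i. i \<in> S \<Longrightarrow> graph_connected W {e \<in> segment xs (a i) (b i). P e}"
    and kept: "\<And>i. i \<in> S \<Longrightarrow> \<exists>e\<in>segment xs (a i) (b i). P e"
  shows "rich C W (filter P xs)"
proof -
  define L where "L = sorted_list_of_set S"
  have "finite S" using S(1) finite_subset by blast
  then have L: "set L = S" "sorted_wrt (<) L" "length L = card S"
    by (simp_all add: L_def)
  have LS: "L ! t \<in> S" if "t < card S" for t
    using L that nth_mem by metis
  have fam': "block_family xs (card S) (\<lambda>t. a (L ! t)) (\<lambda>t. b (L ! t))"
    using block_family_reindex[OF fam L(2)] L S(1) by simp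
  have "graph_connected W
          (segment (filter P xs) (Suc (filter_index P xs (a (L ! t) - 1))) (filter_index P xs (b (L ! t))))"
    if "t < card S" for t
    using fam' that con[OF LS[OF that]] by (subst segment_filter) (auto simp: block_family_def)
  moreover have "block_family (filter P xs) (card S)
      (\<lambda>t. Suc (filter_index P xs (a (L ! t) - 1))) (\<lambda>t. filter_index P xs (b (L ! t)))"
    using LS kept by (intro block_family_filter[OF fam']) auto
  ultimately show ?thesis
    using S(2) unfolding rich_iff_block_family by blast
qed

subsection \<open>Deleting a label\<close>

lemma exists_frequent_member:
  assumes "finite V" "V \<noteq> {}" "finite I" "\<And>i. i \<in> I \<Longrightarrow> A i \<subseteq> V"
  shows "\<exists>v\<in>V. (\<Sum>i\<in>I. card (A i)) \<le> card V * card {i \<in> I. v \<in> A i}"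
proof (rule ccontr)
  assume "\<not> ?thesis"
  then have less: "card V * card {i \<in> I. v \<in> A i} < (\<Sum>i\<in>I. card (A i))" if "v \<in> V" for v
    using that by auto
  have "(\<Sum>i\<in>I. card (A i)) = (\<Sum>i\<in>I. card {v \<in> V. v \<in> A i})"
    using assms(4) by (intro sum.cong) (auto intro: arg_cong[where f = card])
  also have "\<dots> = (\<Sum>v\<in>V. card {i \<in> I. v \<in> A i})"
    using sum.swap_restrict[OF assms(3,1), of "\<lambda>_ _. 1 :: nat" "\<lambda>i v. v \<in> A i"] by simp
  finally have "card V * (\<Sum>i\<in>I. card (A i)) = (\<Sum>v\<in>V. card V * card {i \<in> I. v \<in> A i})"
    by (simp add: sum_distrib_left)
  also have "\<dots> < of_nat (card V) * (\<Sum>i\<in>I. card (A i))"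
    by (rule sum_bounded_above_strict) (use less assms(1,2) in auto)
  finally show False by simp
qed

lemma rich_delete_noncut_vertex:
  assumes "finite V" "3 \<le> card V" "rich (real (card V) / 2 * c) V xs"
  shows "\<exists>k\<in>V. rich c (V - {k}) (filter (\<lambda>\<sigma>. k \<notin> \<sigma>) xs)"
proof -
  obtain m a b where m: "real (card V) / 2 * c \<le> real m" and fam: "block_family xs m a b"
    and con: "\<And>i. i < m \<Longrightarrow> graph_connected V (segment xs (a i) (b i))"
    using assms(3) unfolding rich_iff_block_family by blast
  define NC where "NC i = noncut_vertices V (segment xs (a i) (b i))" for i
  define S where "S k = {i \<in> {..<m}. k \<in> NC i}" for k
  have "NC i \<subseteq> V" for i
    by (auto simp: NC_def noncut_vertices_def)
  moreover have "V \<noteq> {}" using assms(2) by auto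
  ultimately obtain k where k: "k \<in> V" and freq: "(\<Sum>i<m. card (NC i)) \<le> card V * card (S k)"
    using exists_frequent_member[OF assms(1) _ finite_lessThan[of m], where A = NC]
    by (auto simp: S_def)
  have "(\<Sum>i<m. 2) \<le> (\<Sum>i<m. card (NC i))"
    using two_le_card_noncut_vertices[OF assms(1)] con assms(2) by (intro sum_mono) (simp add: NC_def)
  then have "2 * m \<le> card V * card (S k)"
    using freq by simp
  then have "real (2 * m) \<le> real (card V * card (S k))"
    by (simp only: of_nat_le_iff)
  then have "real (card V) * c \<le> real (card V) * real (card (S k))"
    using m by (simp add: field_simps)
  then have card_S: "c \<le> real (card (S k))"
    by (rule mult_left_le_imp_le) (use assms(2) in simp)
  have sub: "S k \<subseteq> {..<m}"
    by (auto simp: S_def)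
  have connected: "graph_connected (V - {k}) {e \<in> segment xs (a i) (b i). k \<notin> e}"
    if "i \<in> S k" for i
    using that by (simp add: S_def NC_def noncut_vertices_def)
  have "finite (V - {k})" "2 \<le> card (V - {k})"
    using assms(1,2) k by auto
  then have kept: "\<exists>e\<in>segment xs (a i) (b i). k \<notin> e" if "i \<in> S k" for i
    using graph_connected_edges_nonempty[OF connected[OF that]] by blast
  show ?thesis
    using rich_filter_subfamily[OF fam sub card_S connected kept] k by blast
qed

subsection \<open>Consecutive collisions of a label\<close>

definition admissible_pair :: "'a set list \<Rightarrow> 'a \<Rightarrow> nat \<Rightarrow> nat \<Rightarrow> bool" where
  "admissible_pair xs k p q \<longleftrightarrow> 1 \<le> p \<and> p < q \<and> q \<le> length xs \<and>
     k \<in> xs ! (p - 1) \<inter> xs ! (q - 1) \<and>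
     (\<forall>j. p < j \<and> j < q \<longrightarrow> k \<notin> xs ! (j - 1)) \<and>
     (xs ! (p - 1) = xs ! (q - 1) \<longrightarrow> (\<exists>j. p < j \<and> j < q \<and> xs ! (p - 1) \<inter> xs ! (j - 1) \<noteq> {}))"

lemma exists_last_before:
  fixes P :: "nat \<Rightarrow> bool"
  assumes "p0 < q" "P p0"
  shows "\<exists>p. p0 \<le> p \<and> p < q \<and> P p \<and> (\<forall>j. p < j \<and> j < q \<longrightarrow> \<not> P j)"
  using assms
proof (induction q)
  case 0
  then show ?case by simp
next
  case (Suc q)
  show ?case
  proof (cases "P q")
    case True
    then show ?thesis using Suc.prems by (intro exI[of _ q]) auto
  next
    case False
    then have "p0 < q" using Suc.prems by (metis less_SucE)
    then show ?thesis using Suc.IH Suc.prems(2) False by (metis less_SucE less_SucI)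
  qed
qed

lemma no_admissible_pair_isolates:
  assumes none: "\<And>p q. \<not> admissible_pair xs k p q"
    and p0: "1 \<le> p0" "k \<in> xs ! (p0 - 1)"
  shows "p0 \<le> q \<Longrightarrow> q \<le> length xs \<Longrightarrow> k \<in> xs ! (q - 1) \<Longrightarrow>
    xs ! (q - 1) = xs ! (p0 - 1) \<and>
    (\<forall>j. p0 \<le> j \<and> j \<le> q \<and> xs ! (j - 1) \<inter> xs ! (p0 - 1) \<noteq> {} \<longrightarrow> xs ! (j - 1) = xs ! (p0 - 1))"
proof (induction q rule: less_induct)
  case (less q)
  show ?case
  proof (cases "q = p0")
    case True
    then show ?thesis by auto
  next
    case False
    then obtain p where p: "p0 \<le> p" "p < q" "k \<in> xs ! (p - 1)"
      and gap: "\<forall>j. p < j \<and> j < q \<longrightarrow> k \<notin> xs ! (j - 1)"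
      using exists_last_before[of p0 q "\<lambda>i. k \<in> xs ! (i - 1)"] less.prems p0(2) by auto
    have IH: "xs ! (p - 1) = xs ! (p0 - 1)"
      "\<forall>j. p0 \<le> j \<and> j \<le> p \<and> xs ! (j - 1) \<inter> xs ! (p0 - 1) \<noteq> {} \<longrightarrow> xs ! (j - 1) = xs ! (p0 - 1)"
      using less.IH[of p] p less.prems by auto
    have "\<not> admissible_pair xs k p q" by (rule none)
    then have same: "xs ! (p - 1) = xs ! (q - 1)"
      and disjoint: "\<forall>j. p < j \<and> j < q \<longrightarrow> xs ! (p - 1) \<inter> xs ! (j - 1) = {}"
      using p gap less.prems p0 by (auto simp: admissible_pair_def)
    show ?thesis
      using IH same disjoint by (metis Int_commute linorder_not_le nat_less_le)
  qed
qed

lemma exists_admissible_pair: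
  assumes p0: "1 \<le> p0" "k \<in> xs ! (p0 - 1)" "w \<notin> xs ! (p0 - 1)"
    and q: "b < q" "q \<le> length xs" "k \<in> xs ! (q - 1)"
    and "p0 < a" and con: "graph_connected V (segment xs a b)" and "k \<in> V" "w \<in> V"
  shows "\<exists>p q. admissible_pair xs k p q"
proof (rule ccontr)
  assume "\<not> ?thesis"
  then have isolated: "xs ! (j - 1) = xs ! (p0 - 1)"
    if "p0 \<le> j" "j \<le> q" "xs ! (j - 1) \<inter> xs ! (p0 - 1) \<noteq> {}" for j
    using no_admissible_pair_isolates[of xs k p0 q] p0 q that by auto
  have "(k, w) \<in> (edge_rel V (segment xs a b))\<^sup>*"
    using con \<open>k \<in> V\<close> \<open>w \<in> V\<close> by (simp add: graph_connected_iff_edge_rel)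
  then have "w \<in> xs ! (p0 - 1)"
  proof (induction rule: rtrancl_induct)
    case base
    then show ?case using p0(2) .
  next
    case (step y z)
    then obtain j where j: "a \<le> j" "j \<le> b" "{y, z} = xs ! (j - 1)"
      by (auto simp: edge_rel_def)
    then have "xs ! (j - 1) = xs ! (p0 - 1)"
      using isolated[of j] step.IH \<open>p0 < a\<close> q(1) by auto
    then show ?case using j(3) by blast
  qed
  then show False using p0(3) by blast
qed

lemma collision_seq_exists_vertex_outside:
  assumes "collision_seq V xs" "finite V" "3 \<le> card V" "\<sigma> \<in> set xs"
  shows "\<exists>w\<in>V. w \<notin> \<sigma>"
proof (rule ccontr)
  obtain x y where "\<sigma> = {x, y}"
    using assms(1,4) unfolding collision_seq_def by blast
  moreover assume "\<not> ?thesis"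
  ultimately have "card V \<le> card {x, y}"
    by (intro card_mono) auto
  also have "\<dots> \<le> 2" by (simp add: card_insert_if)
  finally show False using assms(3) by simp
qed

lemma rich_3_exists_admissible_pair:
  assumes "collision_seq V xs" "finite V" "3 \<le> card V" "rich 3 V xs" "k \<in> V"
  shows "\<exists>p q. admissible_pair xs k p q"
proof -
  obtain m a b where m: "3 \<le> real m" and fam: "block_family xs m a b"
    and con: "\<And>i. i < m \<Longrightarrow> graph_connected V (segment xs (a i) (b i))"
    using assms(4) unfolding rich_iff_block_family by blast
  have "\<exists>y\<in>V. y \<noteq> k"
    using exists_other_if_card_ge_2[of V k] assms(2,3) by simp
  then have occurs: "\<exists>j. a i \<le> j \<and> j \<le> b i \<and> k \<in> xs ! (j - 1)" if "i < m" for i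
    using graph_connected_has_edge[OF con[OF that] assms(5)] by blast
  obtain p0 where p0: "a 0 \<le> p0" "p0 \<le> b 0" "k \<in> xs ! (p0 - 1)"
    using occurs[of 0] m by auto
  obtain q where q: "a 2 \<le> q" "q \<le> b 2" "k \<in> xs ! (q - 1)"
    using occurs[of 2] m by auto
  have blocks: "1 \<le> a 0" "b 0 < a 1" "a 1 \<le> b 1" "b 1 < a 2" "b 2 \<le> length xs"
    using fam m by (auto simp: block_family_def numeral_2_eq_2)
  then have "xs ! (p0 - 1) \<in> set xs"
    using p0 q by (intro nth_mem) linarith
  then obtain w where "w \<in> V" "w \<notin> xs ! (p0 - 1)"
    using collision_seq_exists_vertex_outside[OF assms(1-3)] by blast
  then show ?thesis
    using exists_admissible_pair[of p0 k xs w "b 1" q "a 1" V] p0 q blocks con[of 1] m assms(5)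
    by simp
qed

theorem lemma3p1:
  fixes N :: nat and \<Sigma> :: "nat set list"
  assumes "N \<ge> 3"
    and "collision_seq {1..N} \<Sigma>"
    and "rich (Cconst N) {1..N} \<Sigma>"
  shows "\<exists>k\<in>{1..N}. \<exists>p q. 1 \<le> p \<and> p < q \<and> q \<le> length \<Sigma> \<and>
           k \<in> \<Sigma> ! (p - 1) \<inter> \<Sigma> ! (q - 1) \<and>
           (\<forall>j. p < j \<and> j < q \<longrightarrow> k \<notin> \<Sigma> ! (j - 1)) \<and>
           (\<Sigma> ! (p - 1) = \<Sigma> ! (q - 1) \<longrightarrow>
              (\<exists>j. p < j \<and> j < q \<and> \<Sigma> ! (p - 1) \<inter> \<Sigma> ! (j - 1) \<noteq> {})) \<and>
           rich (2 * Cconst (N - 1) + 1) ({1..N} - {k}) (filter (\<lambda>\<sigma>. k \<notin> \<sigma>) \<Sigma>)"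
proof -
  have "rich (real (card {1..N}) / 2 * (2 * Cconst (N - 1) + 1)) {1..N} \<Sigma>"
    using assms(3) Cconst_rec[OF assms(1)] by simp
  then have "\<exists>k\<in>{1..N}. rich (2 * Cconst (N - 1) + 1) ({1..N} - {k}) (filter (\<lambda>\<sigma>. k \<notin> \<sigma>) \<Sigma>)"
    using assms(1) by (intro rich_delete_noncut_vertex) auto
  then obtain k where k: "k \<in> {1..N}"
    and rich_deleted: "rich (2 * Cconst (N - 1) + 1) ({1..N} - {k}) (filter (\<lambda>\<sigma>. k \<notin> \<sigma>) \<Sigma>)"
    by blast
  have "rich 3 {1..N} \<Sigma>"
    using assms(3) Cconst_ge_3[OF assms(1)] by (rule rich_mono)
  then obtain p q where "admissible_pair \<Sigma> k p q"
    using rich_3_exists_admissible_pair[of "{1..N}" \<Sigma> k] assms(1,2) k by auto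
  then show ?thesis
    using k rich_deleted unfolding admissible_pair_def by blast
qed

end
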